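(* Let $f\in\widehat{\operatorname{PC}^{+}}$ be right-continuous. Then $\varepsilon(f,\mathcal P)=0$ for every partition $\mathcal P$ associated with $f$.
   Context: $X=[0,1[$; $\widehat{\operatorname{PC}^{\bowtie}}$ is the group of bijections $X\to X$ continuous outside a finite subset, containing the group ${\mathfrak S}_{\mathrm{fin}}$ of finitely supported permutations with classical signature $\operatorname{sgn}$ valued in $\mathbb{Z}/2\mathbb{Z}$. For $h\in\widehat{\operatorname{PC}^{\bowtie}}$, a partition associated with $h$ is a finite partition $\mathcal P=\{I_1,\dots,I_n\}$ of $X$ into intervals $I_j=[\alpha_j,b_j[$ such that $h$ is continuous on $I_j^\circ=]\alpha_j,b_j[$ for each $j$ (so $h$ is strictly monotone there and $h(I_j^\circ)$ is an open interval). $\widehat{\operatorname{PC}^{+}}$ is the subgroup of $h\in\widehat{\operatorname{PC}^{\bowtie}}$ that are increasing on each $I_j^\circ$ for some associated partition. Let $\beta_j$ be the left endpoint of $h(I_j^\circ)$; $\{h(\alpha_j)\}=\{\beta_j\}$, and $\sigma_{(h,\mathcal P)}\in{\mathfrak S}_{\mathrm{fin}}$ sends $h(\alpha_j)$ to $\beta_j$ for each $j$ and fixes all other points. $R(h,\mathcal P)$ is the number of $j$ with $h$ decreasing on $I_j^\circ$, and $\varepsilon(h,\mathcal P)=R(h,\mathcal P)+\operatorname{sgn}(\sigma_{(h,\mathcal P)})\bmod 2$. *)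

theory Defs
  imports "HOL-Analysis.Analysis" "HOL-Combinatorics.Permutations"
begin

definition X :: "real set" where "X = {0..<1}"

definition PCbowtie :: "(real \<Rightarrow> real) set" where
  "PCbowtie = {h. bij_betw h X X \<and>
     (\<exists>F. finite F \<and> (\<forall>x\<in>X - F. continuous (at x within X) h))}"

definition is_interval_partition :: "(real \<times> real) set \<Rightarrow> bool" where
  "is_interval_partition P \<longleftrightarrow> finite P \<and> (\<forall>(a,b)\<in>P. a < b) \<and>
     (\<forall>p\<in>P. \<forall>q\<in>P. p \<noteq> q \<longrightarrow> {fst p..<snd p} \<inter> {fst q..<snd q} = {}) \<and>
     (\<Union>(a,b)\<in>P. {a..<b}) = X"

definition associated_partition :: "(real \<Rightarrow> real) \<Rightarrow> (real \<times> real) set \<Rightarrow> bool" where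
  "associated_partition h P \<longleftrightarrow> is_interval_partition P \<and>
     (\<forall>(a,b)\<in>P. continuous_on {a<..<b} h)"

definition incr_on :: "(real \<Rightarrow> real) \<Rightarrow> real set \<Rightarrow> bool" where
  "incr_on h S \<longleftrightarrow> (\<forall>x\<in>S. \<forall>y\<in>S. x < y \<longrightarrow> h x < h y)"

definition decr_on :: "(real \<Rightarrow> real) \<Rightarrow> real set \<Rightarrow> bool" where
  "decr_on h S \<longleftrightarrow> (\<forall>x\<in>S. \<forall>y\<in>S. x < y \<longrightarrow> h y < h x)"

definition PCplus :: "(real \<Rightarrow> real) set" where
  "PCplus = {h \<in> PCbowtie. \<exists>P. associated_partition h P \<and>
              (\<forall>(a,b)\<in>P. incr_on h {a<..<b})}"

definition beta :: "(real \<Rightarrow> real) \<Rightarrow> real \<times> real \<Rightarrow> real" where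
  "beta h I = Inf (h ` {fst I<..<snd I})"

definition sigma_hP :: "(real \<Rightarrow> real) \<Rightarrow> (real \<times> real) set \<Rightarrow> real \<Rightarrow> real" where
  "sigma_hP h P y = (if \<exists>I\<in>P. h (fst I) = y
                     then beta h (THE I. I \<in> P \<and> h (fst I) = y) else y)"

definition R_hP :: "(real \<Rightarrow> real) \<Rightarrow> (real \<times> real) set \<Rightarrow> nat" where
  "R_hP h P = card {I \<in> P. decr_on h {fst I<..<snd I}}"

definition sgn2 :: "(real \<Rightarrow> real) \<Rightarrow> nat" where
  "sgn2 p = (if evenperm p then 0 else 1)"

definition eps_hP :: "(real \<Rightarrow> real) \<Rightarrow> (real \<times> real) set \<Rightarrow> nat" where
  "eps_hP h P = (R_hP h P + sgn2 (sigma_hP h P)) mod 2"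

end

theory Submission
  imports Defs
begin

text \<open>
  Every point of \<open>X\<close> lies in a piece of a partition on whose interior \<open>f\<close> increases, so \<open>f\<close>
  increases immediately to the right of every point. On the interior of a piece of an arbitrary
  associated partition, \<open>f\<close> is continuous and injective, hence strictly monotone, and therefore
  increasing; so \<open>R(f,P) = 0\<close>. Right-continuity at the left endpoint \<open>\<alpha>\<^sub>j\<close> of the piece then
  gives \<open>\<beta>\<^sub>j = inf f(I\<^sub>j) = f(\<alpha>\<^sub>j)\<close>, so \<open>\<sigma>\<close> is the identity, an even permutation.
\<close>

lemma interval_partition_memD:
  assumes "is_interval_partition P" "I \<in> P"
  shows "fst I < snd I" "{fst I..<snd I} \<subseteq> X"
  using assms unfolding is_interval_partition_def by (auto simp: case_prod_beta)

lemma interval_partition_cover: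
  assumes "is_interval_partition P" "x \<in> X"
  obtains I where "I \<in> P" "fst I \<le> x" "x < snd I"
proof -
  have "x \<in> (\<Union>(a,b)\<in>P. {a..<b})"
    using assms unfolding is_interval_partition_def by simp
  then show thesis
    using that by (auto simp: case_prod_beta)
qed

lemma interval_partition_fst_inj:
  assumes "is_interval_partition P" "I \<in> P" "J \<in> P" "fst I = fst J"
  shows "I = J"
proof (rule ccontr)
  assume "I \<noteq> J"
  then have "{fst I..<snd I} \<inter> {fst J..<snd J} = {}"
    using assms(1-3) unfolding is_interval_partition_def by blast
  moreover have "fst I \<in> {fst I..<snd I} \<inter> {fst J..<snd J}"
    using interval_partition_memD(1)[OF assms(1,2)] interval_partition_memD(1)[OF assms(1,3)] assms(4)
    by auto
  ultimately show False by blast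
qed

lemma incr_on_iff_strict_mono_on: "incr_on f S \<longleftrightarrow> strict_mono_on S f"
  unfolding incr_on_def strict_mono_on_def by blast

lemma decr_on_iff_strict_antimono_on: "decr_on f S \<longleftrightarrow> strict_antimono_on S f"
  unfolding decr_on_def monotone_on_def by blast

lemma continuous_inj_on_incr_or_decr:
  fixes f :: "real \<Rightarrow> real"
  assumes "continuous_on {a<..<b} f" "inj_on f {a<..<b}"
  shows "incr_on f {a<..<b} \<or> decr_on f {a<..<b}"
  using assms injective_eq_monotone_map[of "{a<..<b}" f]
  by (simp add: incr_on_iff_strict_mono_on decr_on_iff_strict_antimono_on is_interval_1)

lemma PCplus_inj_on: "f \<in> PCplus \<Longrightarrow> inj_on f X"
  unfolding PCplus_def PCbowtie_def bij_betw_def by blast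

lemma PCplus_incr_on_right:
  assumes "f \<in> PCplus" "a \<in> X"
  obtains e where "a < e" "incr_on f {a<..<e}"
proof -
  obtain P where P: "is_interval_partition P" "\<forall>(c,d)\<in>P. incr_on f {c<..<d}"
    using assms(1) unfolding PCplus_def associated_partition_def by blast
  obtain J where J: "J \<in> P" "fst J \<le> a" "a < snd J"
    using interval_partition_cover[OF P(1) assms(2)] .
  have "incr_on f {fst J<..<snd J}"
    using P(2) J(1) by (auto simp: case_prod_beta)
  then have "incr_on f {a<..<snd J}"
    using J(2) unfolding incr_on_def by auto
  with J(3) show thesis by (rule that)
qed

lemma not_decr_on_if_incr_on_right:
  assumes "a < b" "a < e" "incr_on f {a<..<e}"
  shows "\<not> decr_on f {a<..<b}"
proof
  assume decr: "decr_on f {a<..<b}"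
  define x y where "x = a + (min b e - a) / 3" and "y = a + 2 * (min b e - a) / 3"
  have "x \<in> {a<..<b}" "y \<in> {a<..<b}" "x \<in> {a<..<e}" "y \<in> {a<..<e}" "x < y"
    using assms(1,2) unfolding x_def y_def by (auto simp: min_def field_simps)
  then show False
    using decr assms(3) unfolding decr_on_def incr_on_def by (meson less_asym)
qed

lemma PCplus_not_decr_on_piece:
  assumes "f \<in> PCplus" "is_interval_partition P" "I \<in> P"
  shows "\<not> decr_on f {fst I<..<snd I}"
proof -
  have "fst I \<in> X"
    using interval_partition_memD[OF assms(2,3)] by auto
  then obtain e where "fst I < e" "incr_on f {fst I<..<e}"
    using PCplus_incr_on_right[OF assms(1)] by blast
  then show ?thesis
    using not_decr_on_if_incr_on_right interval_partition_memD(1)[OF assms(2,3)] by blast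
qed

lemma PCplus_incr_on_piece:
  assumes "f \<in> PCplus" "associated_partition f P" "I \<in> P"
  shows "incr_on f {fst I<..<snd I}"
proof -
  have P: "is_interval_partition P"
    using assms(2) unfolding associated_partition_def by simp
  have "continuous_on {fst I<..<snd I} f"
    using assms(2,3) unfolding associated_partition_def by (auto simp: case_prod_beta)
  moreover have "inj_on f {fst I<..<snd I}"
  proof (rule inj_on_subset[OF PCplus_inj_on[OF assms(1)]])
    show "{fst I<..<snd I} \<subseteq> X"
      using interval_partition_memD(2)[OF P assms(3)] by auto
  qed
  ultimately show ?thesis
    using continuous_inj_on_incr_or_decr PCplus_not_decr_on_piece[OF assms(1) P assms(3)] by blast
qed

lemma Inf_image_incr_on_eq_at_right_limit:
  fixes f :: "real \<Rightarrow> real"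
  assumes incr: "incr_on f {a<..<b}" and "a < b" and lim: "(f \<longlongrightarrow> L) (at_right a)"
  shows "Inf (f ` {a<..<b}) = L"
proof (rule antisym)
  have lower: "L \<le> f t" if "t \<in> {a<..<b}" for t
  proof (rule tendsto_upperbound[OF lim])
    have "a < t"
      using that by simp
    then show "\<forall>\<^sub>F s in at_right a. f s \<le> f t"
      by (rule eventually_mono[OF eventually_at_right_real])
        (use incr that in \<open>auto simp: incr_on_def less_imp_le\<close>)
  qed simp
  show "L \<le> Inf (f ` {a<..<b})"
    using \<open>a < b\<close> lower by (intro cInf_greatest) auto
  have bdd: "bdd_below (f ` {a<..<b})"
    using lower by (auto intro!: bdd_belowI[of _ L])
  have "\<forall>\<^sub>F t in at_right a. Inf (f ` {a<..<b}) \<le> f t"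
    using eventually_at_right_real[OF \<open>a < b\<close>] by (rule eventually_mono) (simp add: bdd cInf_lower)
  then show "Inf (f ` {a<..<b}) \<le> L"
    by (rule tendsto_lowerbound[OF lim]) simp
qed

lemma beta_right_continuous_PCplus:
  assumes "f \<in> PCplus" "\<forall>x\<in>X. continuous (at_right x) f" "associated_partition f P" "I \<in> P"
  shows "beta f I = f (fst I)"
proof -
  have P: "is_interval_partition P"
    using assms(3) unfolding associated_partition_def by simp
  have "(f \<longlongrightarrow> f (fst I)) (at_right (fst I))"
    using assms(2) interval_partition_memD[OF P assms(4)] by (auto simp: continuous_within)
  then show ?thesis
    unfolding beta_def
    using Inf_image_incr_on_eq_at_right_limit PCplus_incr_on_piece[OF assms(1,3,4)]
      interval_partition_memD(1)[OF P assms(4)]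
    by blast
qed

lemma sigma_hP_eq_id:
  assumes P: "is_interval_partition P" and inj: "inj_on h X"
    and beta: "\<And>I. I \<in> P \<Longrightarrow> beta h I = h (fst I)"
  shows "sigma_hP h P = id"
proof
  fix y
  show "sigma_hP h P y = id y"
  proof (cases "\<exists>I\<in>P. h (fst I) = y")
    case True
    then obtain I where I: "I \<in> P" "h (fst I) = y" by blast
    have "(THE J. J \<in> P \<and> h (fst J) = y) = I"
    proof (rule the_equality)
      fix J assume J: "J \<in> P \<and> h (fst J) = y"
      have "fst J \<in> X" "fst I \<in> X"
        using interval_partition_memD[OF P, of J] interval_partition_memD[OF P I(1)] J by auto
      then have "fst J = fst I"
        using inj J I(2) by (auto dest: inj_onD)
      then show "J = I"
        using interval_partition_fst_inj[OF P] J I(1) by blast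
    qed (use I in simp)
    then show ?thesis
      using True I beta unfolding sigma_hP_def by simp
  qed (simp add: sigma_hP_def)
qed

theorem proposition3p5:
  fixes f :: "real \<Rightarrow> real"
  assumes "f \<in> PCplus"
    and "\<forall>x\<in>X. continuous (at_right x) f"
    and "associated_partition f P"
  shows "eps_hP f P = 0"
proof -
  have P: "is_interval_partition P"
    using assms(3) unfolding associated_partition_def by simp
  have "R_hP f P = 0"
    using PCplus_not_decr_on_piece[OF assms(1) P] P
    unfolding R_hP_def is_interval_partition_def by simp
  moreover have "sigma_hP f P = id"
    using sigma_hP_eq_id[OF P PCplus_inj_on[OF assms(1)]] beta_right_continuous_PCplus[OF assms]
    by blast
  ultimately show ?thesis
    unfolding eps_hP_def sgn2_def by (simp add: evenperm_id)
qed

end
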